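(* Let $\beta\in(0,1/e)$, $\Phi$ as in the context, and $\varepsilon(x)=1/\log\Phi(x)$. Then for every $x>0$, $$\sum_{k=1}^{\infty}\varepsilon\left(E^k(x)\right)=\infty.$$
   Context: $E(x)=e^x$ and $E^k$ is its $k$-th iterate. For $\beta\in(0,1/e)$ let $E_\beta(z)=e^{\beta z}$; it has a repelling real fixed point $\xi>0$ with multiplier $\lambda=\beta\xi>1$. $\Phi$ is the unique local holomorphic solution of $\Phi(E_\beta(z))=\lambda\Phi(z)$ near $\xi$ with $\Phi(\xi)=0$, $\Phi'(\xi)=1$, extended to $[\xi,\infty)$ so that the equation holds there; it is increasing and tends to $\infty$. *)

theory Defs
  imports "HOL-Complex_Analysis.Complex_Analysis"
begin

text \<open>The Koenigs-type linearizer of E_beta(z) = exp(beta z) at its repelling real fixed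
  point xi (multiplier lambda = beta xi > 1), restricted to [xi, infinity), as in the paper:
  it agrees near xi with a local holomorphic solution F of F(E_beta z) = lambda F z
  normalized by F xi = 0, F' xi = 1, it satisfies the functional equation on [xi,inf),
  it is increasing and tends to infinity.\<close>
definition is_Phi :: "real \<Rightarrow> real \<Rightarrow> (real \<Rightarrow> real) \<Rightarrow> bool" where
  "is_Phi \<beta> \<xi> \<Phi> \<longleftrightarrow>
     \<xi> > 0 \<and> exp (\<beta> * \<xi>) = \<xi> \<and> \<beta> * \<xi> > 1 \<and>
     (\<exists>r>0. \<exists>F. F holomorphic_on ball (complex_of_real \<xi>) r \<and>
        F (complex_of_real \<xi>) = 0 \<and> deriv F (complex_of_real \<xi>) = 1 \<and>
        (\<forall>z\<in>ball (complex_of_real \<xi>) r. exp (complex_of_real \<beta> * z) \<in> ball (complex_of_real \<xi>) r \<longrightarrow>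
            F (exp (complex_of_real \<beta> * z)) = complex_of_real (\<beta> * \<xi>) * F z) \<and>
        (\<forall>x\<in>{\<xi>..<\<xi>+r}. F (complex_of_real x) = complex_of_real (\<Phi> x))) \<and>
     (\<forall>x\<ge>\<xi>. \<Phi> (exp (\<beta> * x)) = (\<beta> * \<xi>) * \<Phi> x) \<and>
     strict_mono_on {\<xi>..} \<Phi> \<and>
     filterlim \<Phi> at_top at_top"

definition eps_fun :: "(real \<Rightarrow> real) \<Rightarrow> real \<Rightarrow> real" where
  "eps_fun \<Phi> x = 1 / ln (\<Phi> x)"

end

theory Submission
  imports Defs
begin

text \<open>Two steps of \<open>E\<^sub>\<beta>\<close> outgrow one step of \<open>E\<close> far enough out, and \<open>\<Phi>\<close> conjugates
  \<open>E\<^sub>\<beta>\<close> to multiplication by \<open>\<lambda>\<close>. Hence \<open>\<Phi>(E\<^sup>k x) \<le> \<lambda>\<^sup>2\<^sup>k \<Phi>(y\<^sub>0)\<close> for a suitable base point,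
  so \<open>log \<Phi>(E\<^sup>k x) = O(k)\<close>, and the series is bounded below by a multiple of the harmonic
  series.\<close>

lemma filterlim_partial_sums_at_top_mono:
  fixes f g :: "nat \<Rightarrow> real"
  assumes g: "filterlim (\<lambda>n. \<Sum>k=1..n. g k) at_top sequentially"
    and le: "eventually (\<lambda>k. g k \<le> f k) sequentially"
  shows "filterlim (\<lambda>n. \<Sum>k=1..n. f k) at_top sequentially"
proof -
  obtain N where N: "\<And>k. k \<ge> N \<Longrightarrow> g k \<le> f k"
    using le by (auto simp: eventually_sequentially)
  define c where "c = (\<Sum>k=1..N. f k - g k)"
  have "c + (\<Sum>k=1..n. g k) \<le> (\<Sum>k=1..n. f k)" if "n \<ge> N" for n
  proof -
    have split: "{1..n} = {1..N} \<union> {Suc N..n}" using that by auto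
    have "0 \<le> (\<Sum>k=Suc N..n. f k - g k)" using N by (intro sum_nonneg) auto
    hence "c \<le> (\<Sum>k=1..n. f k - g k)"
      unfolding c_def split by (subst sum.union_disjoint) auto
    thus ?thesis by (simp add: sum_subtractf)
  qed
  hence "eventually (\<lambda>n. c + (\<Sum>k=1..n. g k) \<le> (\<Sum>k=1..n. f k)) sequentially"
    by (auto simp: eventually_sequentially)
  moreover have "filterlim (\<lambda>n. c + (\<Sum>k=1..n. g k)) at_top sequentially"
    by (rule filterlim_tendsto_add_at_top[OF tendsto_const g])
  ultimately show ?thesis by (rule filterlim_at_top_mono[rotated])
qed

lemma filterlim_sum_inverse_mult_at_top:
  fixes C :: real
  assumes "C > 0"
  shows "filterlim (\<lambda>n. \<Sum>k=1..n. 1 / (C * real k)) at_top sequentially"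
proof -
  have "(\<Sum>k=1..n. 1 / (C * real k)) = inverse C * harm n" for n
    by (simp add: harm_def sum_distrib_left field_simps)
  moreover have "filterlim (\<lambda>n. inverse C * harm n) at_top sequentially"
    using assms by (intro filterlim_tendsto_pos_mult_at_top[OF tendsto_const] harm_at_top) auto
  ultimately show ?thesis by simp
qed

lemma funpow_exp_ge: "x + real k \<le> (exp ^^ k) x"
proof (induction k)
  case (Suc k)
  have "x + real k + 1 \<le> exp ((exp ^^ k) x)"
    using Suc exp_ge_add_one_self[of "(exp ^^ k) x"] by linarith
  then show ?case by simp
qed simp

lemma filterlim_funpow_exp_at_top: "filterlim (\<lambda>k. (exp ^^ k) (x::real)) at_top sequentially"
  by (rule filterlim_at_top_mono[OF filterlim_tendsto_add_at_top[OF tendsto_const[of x] filterlim_real_sequentially]])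
    (intro always_eventually allI funpow_exp_ge)

lemma funpow_functional_equation:
  fixes l :: "'b::monoid_mult"
  assumes "\<And>y. y \<in> S \<Longrightarrow> g y \<in> S" and "\<And>y. y \<in> S \<Longrightarrow> \<Phi> (g y) = l * \<Phi> y" and "y \<in> S"
  shows "(g ^^ j) y \<in> S \<and> \<Phi> ((g ^^ j) y) = l ^ j * \<Phi> y"
  by (induction j) (use assms in \<open>auto simp: mult.assoc\<close>)

lemma funpow_le_funpow_double:
  fixes f g :: "'a::order \<Rightarrow> 'a"
  assumes "mono g" and "\<And>y. y \<ge> T \<Longrightarrow> f y \<ge> T" and "\<And>y. y \<ge> T \<Longrightarrow> f y \<le> g (g y)"
    and "y \<ge> T"
  shows "(f ^^ i) y \<le> (g ^^ (2 * i)) y"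
proof -
  have "(f ^^ i) y \<ge> T \<and> (f ^^ i) y \<le> (g ^^ (2 * i)) y"
  proof (induction i)
    case (Suc i)
    have "f ((f ^^ i) y) \<le> g (g ((f ^^ i) y))" using Suc assms(3) by blast
    also have "\<dots> \<le> g (g ((g ^^ (2 * i)) y))" using Suc \<open>mono g\<close> by (auto dest: monoD)
    finally show ?case using Suc assms(2) by simp
  qed (use assms(4) in simp)
  thus ?thesis ..
qed

lemma le_mult_exp_mult:
  fixes \<beta> y :: real
  assumes "\<beta> > 0" and "y \<ge> 4 / \<beta> ^ 3" and "y \<ge> 0"
  shows "y \<le> \<beta> * exp (\<beta> * y)"
proof -
  have "4 \<le> \<beta> ^ 3 * y" using assms by (simp add: field_simps)
  hence "y \<le> \<beta> * (\<beta> * y / 2) ^ 2"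
    using mult_left_mono[of 4 "\<beta> ^ 3 * y" y] assms(3)
    by (simp add: power2_eq_square power3_eq_cube algebra_simps)
  moreover have "\<beta> * y / 2 \<le> exp (\<beta> * y / 2)"
    using exp_ge_add_one_self[of "\<beta> * y / 2"] by linarith
  hence "(\<beta> * y / 2) ^ 2 \<le> exp (\<beta> * y / 2) ^ 2"
    using assms by (intro power_mono) auto
  hence "(\<beta> * y / 2) ^ 2 \<le> exp (\<beta> * y)"
    using exp_double[of "\<beta> * y / 2"] by simp
  ultimately show ?thesis using assms(1) by (smt (verit) mult_left_mono)
qed

lemma Phi_funpow_exp_le:
  assumes "\<beta> > 0" and "is_Phi \<beta> \<xi> \<Phi>" and "y \<ge> \<xi>" and "y \<ge> 4 / \<beta> ^ 3"
  shows "\<Phi> ((exp ^^ i) y) \<le> (\<beta> * \<xi>) ^ (2 * i) * \<Phi> y"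
proof -
  define E\<^sub>\<beta> where "E\<^sub>\<beta> z = exp (\<beta> * z)" for z
  have \<xi>: "\<xi> > 0" "E\<^sub>\<beta> \<xi> = \<xi>" and fe: "\<And>z. z \<ge> \<xi> \<Longrightarrow> \<Phi> (E\<^sub>\<beta> z) = (\<beta> * \<xi>) * \<Phi> z"
    and mono_\<Phi>: "strict_mono_on {\<xi>..} \<Phi>"
    using assms(2) by (auto simp: is_Phi_def E\<^sub>\<beta>_def)
  have mono: "mono E\<^sub>\<beta>" using assms(1) by (auto simp: mono_def E\<^sub>\<beta>_def)
  have in_dom: "z \<ge> \<xi> \<Longrightarrow> E\<^sub>\<beta> z \<ge> \<xi>" for z using monoD[OF mono] \<xi>(2) by metis
  let ?T = "max \<xi> (4 / \<beta> ^ 3)"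
  have "z \<ge> ?T \<Longrightarrow> exp z \<ge> ?T" for z
    using exp_ge_add_one_self[of z] by linarith
  moreover have "exp z \<le> E\<^sub>\<beta> (E\<^sub>\<beta> z)" if "z \<ge> ?T" for z
    using le_mult_exp_mult[OF assms(1), of z] that \<xi>(1) by (simp add: E\<^sub>\<beta>_def)
  ultimately have le: "(exp ^^ i) y \<le> (E\<^sub>\<beta> ^^ (2 * i)) y"
    by (rule funpow_le_funpow_double[OF mono]) (use assms(3,4) in auto)
  have "(exp ^^ i) y \<ge> \<xi>" using funpow_exp_ge[of y i] assms(3) by simp
  hence "\<Phi> ((exp ^^ i) y) \<le> \<Phi> ((E\<^sub>\<beta> ^^ (2 * i)) y)"
    using le by (intro strict_mono_on_leD[OF mono_\<Phi>]) auto
  also have "\<dots> = (\<beta> * \<xi>) ^ (2 * i) * \<Phi> y"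
    using funpow_functional_equation[of "{\<xi>..}" E\<^sub>\<beta> \<Phi> "\<beta> * \<xi>"] in_dom fe assms(3) by simp
  finally show ?thesis .
qed

lemma ln_Phi_funpow_exp_linear_bound:
  assumes "\<beta> > 0" and "is_Phi \<beta> \<xi> \<Phi>"
  obtains C where "C > 0" and "eventually (\<lambda>k. ln (\<Phi> ((exp ^^ k) x)) \<le> C * real k) sequentially"
proof -
  define a where "a k = (exp ^^ k) x" for k
  define l where "l = \<beta> * \<xi>"
  have "l > 1" and \<Phi>_lim: "filterlim \<Phi> at_top at_top"
    using assms(2) by (auto simp: is_Phi_def l_def)
  have a_lim: "filterlim a at_top sequentially"
    unfolding a_def by (rule filterlim_funpow_exp_at_top)
  have "eventually (\<lambda>k. a k \<ge> max \<xi> (4 / \<beta> ^ 3)) sequentially"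
    using a_lim unfolding filterlim_at_top by blast
  moreover have "eventually (\<lambda>k. \<Phi> (a k) > 0) sequentially"
    using filterlim_compose[OF \<Phi>_lim a_lim] by (simp add: filterlim_at_top_dense)
  ultimately have "eventually (\<lambda>k. a k \<ge> max \<xi> (4 / \<beta> ^ 3) \<and> \<Phi> (a k) > 0) sequentially"
    by (rule eventually_conj)
  then obtain K where K: "\<And>k. k \<ge> K \<Longrightarrow> a k \<ge> max \<xi> (4 / \<beta> ^ 3) \<and> \<Phi> (a k) > 0"
    unfolding eventually_sequentially by blast
  define C where "C = 2 * ln l + \<bar>ln (\<Phi> (a K))\<bar> + 1"
  have "ln l > 0" using \<open>l > 1\<close> by simp
  have "ln (\<Phi> (a k)) \<le> C * real k" if k: "k \<ge> max 1 K" for k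
  proof -
    have "a k = (exp ^^ (k - K)) (a K)"
      using k funpow_add[of "k - K" K "exp :: real \<Rightarrow> real"] by (simp add: a_def)
    hence "\<Phi> (a k) \<le> l ^ (2 * (k - K)) * \<Phi> (a K)"
      using Phi_funpow_exp_le[OF assms] K[of K] by (simp add: l_def)
    hence "ln (\<Phi> (a k)) \<le> ln (l ^ (2 * (k - K)) * \<Phi> (a K))"
      using K k \<open>l > 1\<close> by simp
    also have "\<dots> = real (2 * (k - K)) * ln l + ln (\<Phi> (a K))"
      using K[of K] \<open>l > 1\<close> by (simp add: ln_mult ln_realpow)
    also have "\<dots> \<le> 2 * ln l * real k + \<bar>ln (\<Phi> (a K))\<bar> * real k"
    proof (rule add_mono)
      show "real (2 * (k - K)) * ln l \<le> 2 * ln l * real k"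
        using \<open>ln l > 0\<close> by (simp add: of_nat_diff)
      show "ln (\<Phi> (a K)) \<le> \<bar>ln (\<Phi> (a K))\<bar> * real k"
        using k abs_ge_self[of "ln (\<Phi> (a K))"] mult_left_mono[of 1 "real k" "\<bar>ln (\<Phi> (a K))\<bar>"]
        by simp
    qed
    also have "\<dots> \<le> C * real k" by (simp add: C_def algebra_simps)
    finally show ?thesis .
  qed
  moreover have "C > 0" using \<open>ln l > 0\<close> by (simp add: C_def add_pos_nonneg)
  ultimately show ?thesis
    using that unfolding a_def eventually_sequentially by blast
qed

theorem lemma4p7:
  fixes \<beta> \<xi> :: real and \<Phi> :: "real \<Rightarrow> real" and x :: real
  assumes "0 < \<beta>" "\<beta> < 1 / exp 1"
    and "is_Phi \<beta> \<xi> \<Phi>"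
    and "x > 0"
  shows "filterlim (\<lambda>n. \<Sum>k=1..n. eps_fun \<Phi> ((exp ^^ k) x)) at_top sequentially"
proof -
  obtain C where "C > 0" and bound: "eventually (\<lambda>k. ln (\<Phi> ((exp ^^ k) x)) \<le> C * real k) sequentially"
    using ln_Phi_funpow_exp_linear_bound[OF assms(1,3)] .
  have "filterlim (\<lambda>k. \<Phi> ((exp ^^ k) x)) at_top sequentially"
    using assms(3) filterlim_funpow_exp_at_top by (auto simp: is_Phi_def intro: filterlim_compose)
  hence "eventually (\<lambda>k. \<Phi> ((exp ^^ k) x) \<ge> exp 1) sequentially"
    by (simp add: filterlim_at_top)
  hence "eventually (\<lambda>k. ln (\<Phi> ((exp ^^ k) x)) \<ge> 1) sequentially"
    by eventually_elim (metis exp_gt_zero ln_exp ln_le_cancel_iff order_less_le_trans)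
  with bound have "eventually (\<lambda>k. 1 / (C * real k) \<le> eps_fun \<Phi> ((exp ^^ k) x)) sequentially"
    by eventually_elim (auto simp: eps_fun_def intro: divide_left_mono)
  then show ?thesis
    by (rule filterlim_partial_sums_at_top_mono[OF filterlim_sum_inverse_mult_at_top[OF \<open>C > 0\<close>]])
qed

end
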